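(* (Work in $\mathsf{ZFC}$.) Let $\kappa$ be a strongly inaccessible cardinal. There is no $\boldsymbol\Sigma(L_{\kappa\omega}(=,\neq,\in,\notin))$ formula $\phi(x,y)$ (with parameters from $H_\kappa$) such that for all $a,b\in H_\kappa$: $H_\kappa\models\phi[a,b]$ if and only if $b$ is the powerset of $a$.
   Context: $H_\kappa$ is the set of sets of hereditary cardinality less than $\kappa$. A $\boldsymbol\Sigma(L_{\kappa\omega}(=,\neq,\in,\notin))$ formula is an infinitary formula with finitely many free variables, built from atomic formulas $s=t$, $s\neq t$, $s\in t$, $s\notin t$ (and $\top,\bot$), where terms are variables or parameters naming elements of $H_\kappa$, using conjunctions and disjunctions of fewer than $\kappa$ formulas, bounded universal quantification $\forall x\in t$, and unbounded existential quantification $\exists x$; no negation connective, no implication, no unbounded universal quantification. *)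

theory Defs
  imports Main
begin

definition elts :: "('v \<Rightarrow> 'v \<Rightarrow> bool) \<Rightarrow> 'v \<Rightarrow> 'v set" where
  "elts mem x = {y. mem y x}"

definition zf_model :: "('v \<Rightarrow> 'v \<Rightarrow> bool) \<Rightarrow> bool" where
  "zf_model mem \<longleftrightarrow>
     (\<forall>x y. elts mem x = elts mem y \<longrightarrow> x = y) \<comment> \<open>extensionality\<close>
   \<and> wfP mem \<comment> \<open>foundation\<close>
   \<and> (\<forall>x S. S \<subseteq> elts mem x \<longrightarrow> (\<exists>z. elts mem z = S)) \<comment> \<open>separation\<close>
   \<and> (\<forall>x y. \<exists>z. elts mem z = {x, y}) \<comment> \<open>pairing\<close>
   \<and> (\<forall>x. \<exists>z. elts mem z = \<Union> (elts mem ` elts mem x)) \<comment> \<open>union\<close>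
   \<and> (\<forall>x. \<exists>z. elts mem z = {y. elts mem y \<subseteq> elts mem x}) \<comment> \<open>power set\<close>
   \<and> (\<forall>x (f :: 'v \<Rightarrow> 'v). \<exists>z. elts mem z = f ` elts mem x) \<comment> \<open>replacement\<close>
   \<and> (\<exists>z. (\<exists>e\<in>elts mem z. elts mem e = {})
          \<and> (\<forall>y\<in>elts mem z. \<exists>s\<in>elts mem z. elts mem s = insert y (elts mem y))) \<comment> \<open>infinity\<close>"

definition transset :: "('v \<Rightarrow> 'v \<Rightarrow> bool) \<Rightarrow> 'v \<Rightarrow> bool" where
  "transset mem x \<longleftrightarrow> (\<forall>y\<in>elts mem x. elts mem y \<subseteq> elts mem x)"

definition ordinal :: "('v \<Rightarrow> 'v \<Rightarrow> bool) \<Rightarrow> 'v \<Rightarrow> bool" where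
  "ordinal mem x \<longleftrightarrow> transset mem x \<and> (\<forall>y\<in>elts mem x. transset mem y)"

definition cardinal :: "('v \<Rightarrow> 'v \<Rightarrow> bool) \<Rightarrow> 'v \<Rightarrow> bool" where
  "cardinal mem k \<longleftrightarrow> ordinal mem k \<and>
     (\<forall>b\<in>elts mem k. (card_of (elts mem b), card_of (elts mem k)) \<notin> ordIso)"

definition strongly_inaccessible :: "('v \<Rightarrow> 'v \<Rightarrow> bool) \<Rightarrow> 'v \<Rightarrow> bool" where
  "strongly_inaccessible mem k \<longleftrightarrow> cardinal mem k
   \<and> (card_of (UNIV :: nat set), card_of (elts mem k)) \<in> ordLess \<comment> \<open>uncountable\<close>
   \<and> (\<forall>S. S \<subseteq> elts mem k \<longrightarrow> (card_of S, card_of (elts mem k)) \<in> ordLess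
          \<longrightarrow> (\<exists>b\<in>elts mem k. S \<subseteq> elts mem b)) \<comment> \<open>regular\<close>
   \<and> (\<forall>b\<in>elts mem k. (card_of (Pow (elts mem b)), card_of (elts mem k)) \<in> ordLess) \<comment> \<open>strong limit\<close>"

definition Hk :: "('v \<Rightarrow> 'v \<Rightarrow> bool) \<Rightarrow> 'v \<Rightarrow> 'v set" where
  "Hk mem k = {x. (card_of {y. mem\<^sup>+\<^sup>+ y x}, card_of (elts mem k)) \<in> ordLess}"

datatype 'v tm = Var nat | Par 'v

datatype 'v fm =
    FEq "'v tm" "'v tm" | FNeq "'v tm" "'v tm" | FMem "'v tm" "'v tm" | FNmem "'v tm" "'v tm"
  | FTop | FBot
  | FConj "'v set" "'v \<Rightarrow> 'v fm"
  | FDisj "'v set" "'v \<Rightarrow> 'v fm"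
  | FBall nat "'v tm" "'v fm"
  | FEx nat "'v fm"

fun fv_tm :: "'v tm \<Rightarrow> nat set" where
  "fv_tm (Var n) = {n}" | "fv_tm (Par _) = {}"

fun pars_tm :: "'v tm \<Rightarrow> 'v set" where
  "pars_tm (Var _) = {}" | "pars_tm (Par p) = {p}"

primrec fv :: "'v fm \<Rightarrow> nat set" where
  "fv (FEq s t) = fv_tm s \<union> fv_tm t"
| "fv (FNeq s t) = fv_tm s \<union> fv_tm t"
| "fv (FMem s t) = fv_tm s \<union> fv_tm t"
| "fv (FNmem s t) = fv_tm s \<union> fv_tm t"
| "fv FTop = {}"
| "fv FBot = {}"
| "fv (FConj I f) = (\<Union>i\<in>I. fv (f i))"
| "fv (FDisj I f) = (\<Union>i\<in>I. fv (f i))"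
| "fv (FBall x t p) = fv_tm t \<union> (fv p - {x})"
| "fv (FEx x p) = fv p - {x}"

primrec sigma_fm :: "('v \<Rightarrow> 'v \<Rightarrow> bool) \<Rightarrow> 'v \<Rightarrow> 'v fm \<Rightarrow> bool" where
  "sigma_fm mem k (FEq s t) = (pars_tm s \<union> pars_tm t \<subseteq> Hk mem k)"
| "sigma_fm mem k (FNeq s t) = (pars_tm s \<union> pars_tm t \<subseteq> Hk mem k)"
| "sigma_fm mem k (FMem s t) = (pars_tm s \<union> pars_tm t \<subseteq> Hk mem k)"
| "sigma_fm mem k (FNmem s t) = (pars_tm s \<union> pars_tm t \<subseteq> Hk mem k)"
| "sigma_fm mem k FTop = True"
| "sigma_fm mem k FBot = True"
| "sigma_fm mem k (FConj I f) = ((card_of I, card_of (elts mem k)) \<in> ordLess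
      \<and> (\<forall>i\<in>I. sigma_fm mem k (f i)))"
| "sigma_fm mem k (FDisj I f) = ((card_of I, card_of (elts mem k)) \<in> ordLess
      \<and> (\<forall>i\<in>I. sigma_fm mem k (f i)))"
| "sigma_fm mem k (FBall x t p) = (pars_tm t \<subseteq> Hk mem k \<and> sigma_fm mem k p)"
| "sigma_fm mem k (FEx x p) = sigma_fm mem k p"

fun ev :: "(nat \<Rightarrow> 'v) \<Rightarrow> 'v tm \<Rightarrow> 'v" where
  "ev e (Var n) = e n" | "ev e (Par p) = p"

primrec sat :: "('v \<Rightarrow> 'v \<Rightarrow> bool) \<Rightarrow> 'v set \<Rightarrow> (nat \<Rightarrow> 'v) \<Rightarrow> 'v fm \<Rightarrow> bool" where
  "sat mem H e (FEq s t) = (ev e s = ev e t)"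
| "sat mem H e (FNeq s t) = (ev e s \<noteq> ev e t)"
| "sat mem H e (FMem s t) = mem (ev e s) (ev e t)"
| "sat mem H e (FNmem s t) = (\<not> mem (ev e s) (ev e t))"
| "sat mem H e FTop = True"
| "sat mem H e FBot = False"
| "sat mem H e (FConj I f) = (\<forall>i\<in>I. sat mem H e (f i))"
| "sat mem H e (FDisj I f) = (\<exists>i\<in>I. sat mem H e (f i))"
| "sat mem H e (FBall x t p) = (\<forall>u\<in>H. mem u (ev e t) \<longrightarrow> sat mem H (e(x := u)) p)"
| "sat mem H e (FEx x p) = (\<exists>u\<in>H. sat mem H (e(x := u)) p)"

end

(*
  Suppose a Sigma formula phi with parameters from H_kappa defined the power set operation there.
  Fewer than kappa sets are involved in phi, so some a in kappa is larger than the number of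
  subformulas and than the transitive closure T of the parameters. Close {a, P(a)}, the elements
  of a and T under Skolem witnesses for the existential subformulas of phi (and under a choice of
  elements distinguishing distinct sets) inside H_kappa: the hull M has at most |a| elements, and
  phi(a, P(a)) holds in M. The Mostowski collapse of M fixes a, its elements and the parameters,
  and Sigma formulas persist upwards along it, so phi(a, c) holds in H_kappa for the image c of
  P(a). Hence c is the power set of a, although all its elements lie in the image of M, which has
  at most |a| elements: this contradicts Cantor's theorem.
*)

theory Submission
  imports Defs
begin

unbundle cardinal_syntax

section \<open>Cardinality bounds for infinite sets\<close>

lemma finite_card_of_ordLess_infinite: "finite A \<Longrightarrow> infinite B \<Longrightarrow> |A| <o |B|"
  by (rule finite_ordLess_infinite) (simp_all add: card_of_Well_order Field_card_of card_of_well_order_on)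

lemma card_of_Times_ordLeq_infinite:
  "infinite D \<Longrightarrow> |A| \<le>o |D| \<Longrightarrow> |B| \<le>o |D| \<Longrightarrow> |A \<times> B| \<le>o |D|"
  by (rule card_of_Times_ordLeq_infinite_Field) (simp_all add: card_of_Card_order Field_card_of card_of_card_order_on)

lemma card_of_Un_ordLeq_infinite:
  "infinite D \<Longrightarrow> |A| \<le>o |D| \<Longrightarrow> |B| \<le>o |D| \<Longrightarrow> |A \<union> B| \<le>o |D|"
  by (rule card_of_Un_ordLeq_infinite_Field) (simp_all add: card_of_Card_order Field_card_of card_of_card_order_on)

lemma card_of_insert_ordLeq_infinite: "infinite D \<Longrightarrow> |A| \<le>o |D| \<Longrightarrow> |insert x A| \<le>o |D|"
  using card_of_Un_ordLeq_infinite[of D "{x}" A] finite_card_of_ordLess_infinite[of "{x}" D]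
  by (simp add: ordLess_imp_ordLeq)

lemma card_of_Times_ordLess_infinite:
  assumes "infinite C" "|A| <o |C|" "|B| <o |C|"
  shows "|A \<times> B| <o |C|"
proof (cases "finite (A <+> B)")
  case True
  then have "finite (A \<times> B)"
    by simp
  then show ?thesis
    using assms(1) by (rule finite_card_of_ordLess_infinite)
next
  case False
  have "|A \<times> B| \<le>o |(A <+> B) \<times> B|"
    by (rule card_of_Times_mono1[OF card_of_Plus1])
  also have "|(A <+> B) \<times> B| \<le>o |(A <+> B) \<times> (A <+> B)|"
    by (rule card_of_Times_mono2[OF card_of_Plus2])
  also have "|(A <+> B) \<times> (A <+> B)| =o |A <+> B|"
    using card_of_Times_same_infinite False by blast
  finally show ?thesis
    using card_of_Plus_ordLess_infinite assms ordLeq_ordLess_trans by blast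
qed

lemma card_of_lists_ordLeq_infinite:
  assumes D: "infinite D" and A: "|A| \<le>o |D|"
  shows "|lists A| \<le>o |D|"
proof -
  have length_n: "|{xs \<in> lists A. length xs = n}| \<le>o |D|" for n
  proof (induction n)
    case 0
    show ?case
      using finite_card_of_ordLess_infinite[OF _ D, of "{[]}"] ordLess_imp_ordLeq
      by (simp add: Collect_conj_eq)
  next
    case (Suc n)
    have "{xs \<in> lists A. length xs = Suc n} = (\<lambda>(x, xs). x # xs) ` (A \<times> {xs \<in> lists A. length xs = n})"
      by (auto simp: length_Suc_conv)
    moreover have "|A \<times> {xs \<in> lists A. length xs = n}| \<le>o |D|"
      by (rule card_of_Times_ordLeq_infinite[OF D A Suc])
    ultimately show ?case
      by (simp only:) (rule ordLeq_transitive[OF card_of_image])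
  qed
  have "lists A = (\<Union>n. {xs \<in> lists A. length xs = n})"
    by auto
  moreover have "|\<Union>n. {xs \<in> lists A. length xs = n}| \<le>o |D|"
    using D infinite_iff_card_of_nat length_n by (intro card_of_UNION_ordLeq_infinite) auto
  ultimately show ?thesis
    by simp
qed

primrec closure_stage :: "('a list \<Rightarrow> 'a) set \<Rightarrow> 'a set \<Rightarrow> nat \<Rightarrow> 'a set" where
  "closure_stage F X 0 = X"
| "closure_stage F X (Suc n) =
     closure_stage F X n \<union> (\<lambda>(f, xs). f xs) ` (F \<times> lists (closure_stage F X n))"

lemma closure_stage_mono: "m \<le> n \<Longrightarrow> closure_stage F X m \<subseteq> closure_stage F X n"
  by (rule lift_Suc_mono_le) auto

lemma closure_stage_subset:
  assumes "X \<subseteq> U" "\<And>f xs. f \<in> F \<Longrightarrow> set xs \<subseteq> U \<Longrightarrow> f xs \<in> U"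
  shows "closure_stage F X n \<subseteq> U"
proof (induction n)
  case (Suc n)
  then show ?case
    using assms(2) by (fastforce simp: in_lists_conv_set)
qed (simp add: assms(1))

lemma card_of_closure_stage:
  assumes D: "infinite D" and "|X| \<le>o |D|" and F: "|F| \<le>o |D|"
  shows "|closure_stage F X n| \<le>o |D|"
proof (induction n)
  case (Suc n)
  have "|F \<times> lists (closure_stage F X n)| \<le>o |D|"
    by (intro card_of_Times_ordLeq_infinite card_of_lists_ordLeq_infinite D F Suc)
  then have "|(\<lambda>(f, xs). f xs) ` (F \<times> lists (closure_stage F X n))| \<le>o |D|"
    by (rule ordLeq_transitive[OF card_of_image])
  then show ?case
    using card_of_Un_ordLeq_infinite[OF D Suc] by simp
qed (simp add: assms(2))

lemma finite_subset_closure_stage: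
  "set xs \<subseteq> (\<Union>n. closure_stage F X n) \<Longrightarrow> \<exists>n. set xs \<subseteq> closure_stage F X n"
proof (induction xs)
  case (Cons x xs)
  then obtain m n where "x \<in> closure_stage F X m" "set xs \<subseteq> closure_stage F X n"
    by auto
  then have "set (x # xs) \<subseteq> closure_stage F X (max m n)"
    using closure_stage_mono[of m "max m n" F X] closure_stage_mono[of n "max m n" F X] by auto
  then show ?case ..
qed simp

lemma finitary_closure:
  assumes D: "infinite D" and X: "|X| \<le>o |D|" and F: "|F| \<le>o |D|"
    and "X \<subseteq> U" and F_U: "\<And>f xs. f \<in> F \<Longrightarrow> set xs \<subseteq> U \<Longrightarrow> f xs \<in> U"
  obtains M where "X \<subseteq> M" "M \<subseteq> U" "|M| \<le>o |D|"
    "\<And>f xs. f \<in> F \<Longrightarrow> set xs \<subseteq> M \<Longrightarrow> f xs \<in> M"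
proof (rule that[of "\<Union>n. closure_stage F X n"])
  show "X \<subseteq> (\<Union>n. closure_stage F X n)"
    using UN_upper[of 0 UNIV "closure_stage F X"] by simp
  show "(\<Union>n. closure_stage F X n) \<subseteq> U"
    using closure_stage_subset[OF \<open>X \<subseteq> U\<close>, of F] F_U by blast
  show "|\<Union>n. closure_stage F X n| \<le>o |D|"
    using D infinite_iff_card_of_nat card_of_closure_stage[OF D X F]
    by (intro card_of_UNION_ordLeq_infinite) auto
  fix f xs
  assume "f \<in> F" "set xs \<subseteq> (\<Union>n. closure_stage F X n)"
  then obtain n where "f \<in> F" "xs \<in> lists (closure_stage F X n)"
    using finite_subset_closure_stage[of xs F X] by (auto simp: in_lists_conv_set)
  then have "f xs \<in> closure_stage F X (Suc n)"
    by force
  then show "f xs \<in> (\<Union>n. closure_stage F X n)"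
    by blast
qed

section \<open>Subformulas, parameters and persistence of Sigma formulas\<close>

primrec subfms :: "'v fm \<Rightarrow> 'v fm set" where
  "subfms (FEq s t) = {FEq s t}"
| "subfms (FNeq s t) = {FNeq s t}"
| "subfms (FMem s t) = {FMem s t}"
| "subfms (FNmem s t) = {FNmem s t}"
| "subfms FTop = {FTop}"
| "subfms FBot = {FBot}"
| "subfms (FConj I f) = insert (FConj I f) (\<Union>i\<in>I. subfms (f i))"
| "subfms (FDisj I f) = insert (FDisj I f) (\<Union>i\<in>I. subfms (f i))"
| "subfms (FBall x t p) = insert (FBall x t p) (subfms p)"
| "subfms (FEx x p) = insert (FEx x p) (subfms p)"

lemma finite_fv_subfm: "finite (fv \<phi>) \<Longrightarrow> \<psi> \<in> subfms \<phi> \<Longrightarrow> finite (fv \<psi>)"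
proof (induction \<phi>)
  case (FConj I f)
  show ?case
  proof (cases "\<psi> = FConj I f")
    case False
    then obtain i where "i \<in> I" "\<psi> \<in> subfms (f i)"
      using FConj.prems by auto
    moreover have "finite (fv (f i))"
      using FConj.prems(1) \<open>i \<in> I\<close> by (auto intro: finite_subset[OF UN_upper[of i I "\<lambda>i. fv (f i)"]])
    ultimately show ?thesis
      using FConj.IH by blast
  qed (use FConj.prems in simp)
next
  case (FDisj I f)
  show ?case
  proof (cases "\<psi> = FDisj I f")
    case False
    then obtain i where "i \<in> I" "\<psi> \<in> subfms (f i)"
      using FDisj.prems by auto
    moreover have "finite (fv (f i))"
      using FDisj.prems(1) \<open>i \<in> I\<close> by (auto intro: finite_subset[OF UN_upper[of i I "\<lambda>i. fv (f i)"]])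
    ultimately show ?thesis
      using FDisj.IH by blast
  qed (use FDisj.prems in simp)
next
  case (FBall x t p)
  then show ?case
    using finite_subset[of "fv p" "insert x (fv (FBall x t p))"] by auto
next
  case (FEx x p)
  then show ?case
    using finite_subset[of "fv p" "insert x (fv (FEx x p))"] by auto
qed auto

primrec params :: "'v fm \<Rightarrow> 'v set" where
  "params (FEq s t) = pars_tm s \<union> pars_tm t"
| "params (FNeq s t) = pars_tm s \<union> pars_tm t"
| "params (FMem s t) = pars_tm s \<union> pars_tm t"
| "params (FNmem s t) = pars_tm s \<union> pars_tm t"
| "params FTop = {}"
| "params FBot = {}"
| "params (FConj I f) = (\<Union>i\<in>I. params (f i))"
| "params (FDisj I f) = (\<Union>i\<in>I. params (f i))"
| "params (FBall x t p) = pars_tm t \<union> params p"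
| "params (FEx x p) = params p"

lemma finite_pars_tm: "finite (pars_tm t)"
  by (cases t) auto

lemma sigma_fm_params: "sigma_fm mem k \<phi> \<Longrightarrow> params \<phi> \<subseteq> Hk mem k"
  by (induction \<phi>) auto

lemma ev_cong: "(\<And>n. n \<in> fv_tm t \<Longrightarrow> e n = e' n) \<Longrightarrow> ev e t = ev e' t"
  by (cases t) auto

lemma sat_cong: "(\<And>n. n \<in> fv \<phi> \<Longrightarrow> e n = e' n) \<Longrightarrow> sat mem U e \<phi> = sat mem U e' \<phi>"
proof (induction \<phi> arbitrary: e e')
  case (FConj I f)
  have "sat mem U e (f i) = sat mem U e' (f i)" if "i \<in> I" for i
    using FConj.prems that by (intro FConj.IH) auto
  then show ?case
    by simp
next
  case (FDisj I f)
  have "sat mem U e (f i) = sat mem U e' (f i)" if "i \<in> I" for i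
    using FDisj.prems that by (intro FDisj.IH) auto
  then show ?case
    by simp
next
  case (FBall x t p)
  have "ev e t = ev e' t"
    using FBall.prems by (intro ev_cong) simp
  moreover have "sat mem U (e(x := u)) p = sat mem U (e'(x := u)) p" for u
    using FBall.prems by (intro FBall.IH) simp
  ultimately show ?case
    by simp
next
  case (FEx x p)
  have "sat mem U (e(x := u)) p = sat mem U (e'(x := u)) p" for u
    using FEx.prems by (intro FEx.IH) simp
  then show ?case
    by simp
qed (simp_all, (metis ev_cong UnI1 UnI2)+)


definition skolem_closed :: "('v \<Rightarrow> 'v \<Rightarrow> bool) \<Rightarrow> 'v set \<Rightarrow> 'v fm set \<Rightarrow> 'v set \<Rightarrow> bool" where
  "skolem_closed mem U Q M \<longleftrightarrow>
     (\<forall>x p e. FEx x p \<in> Q \<longrightarrow> (\<forall>n\<in>fv (FEx x p). e n \<in> M) \<longrightarrow> sat mem U e (FEx x p)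
        \<longrightarrow> (\<exists>u\<in>M. sat mem U (e(x := u)) p))"

lemma sat_downward:
  assumes "M \<subseteq> U" and closed: "skolem_closed mem U Q M"
  shows "subfms \<phi> \<subseteq> Q \<Longrightarrow> \<forall>n\<in>fv \<phi>. e n \<in> M \<Longrightarrow> sat mem U e \<phi> \<Longrightarrow> sat mem M e \<phi>"
proof (induction \<phi> arbitrary: e)
  case (FConj I f)
  have "sat mem M e (f i)" if "i \<in> I" for i
    using FConj.prems that by (intro FConj.IH) auto
  then show ?case
    by simp
next
  case (FDisj I f)
  then obtain i where "i \<in> I" "sat mem U e (f i)"
    by auto
  then have "sat mem M e (f i)"
    using FDisj.prems by (intro FDisj.IH) auto
  then show ?case
    using \<open>i \<in> I\<close> by auto
next
  case (FBall x t p)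
  then show ?case
    using \<open>M \<subseteq> U\<close> by (auto intro!: FBall.IH)
next
  case (FEx x p)
  then obtain u where "u \<in> M" "sat mem U (e(x := u)) p"
    using closed unfolding skolem_closed_def by (metis insert_subset subfms.simps(10))
  moreover have "subfms p \<subseteq> Q" "\<forall>n\<in>fv p. (e(x := u)) n \<in> M"
    using FEx.prems \<open>u \<in> M\<close> by auto
  ultimately have "sat mem M (e(x := u)) p"
    using FEx.IH by blast
  then show ?case
    using \<open>u \<in> M\<close> by auto
qed auto

lemma ev_comp: "\<forall>p\<in>pars_tm s. g p = p \<Longrightarrow> ev (\<lambda>n. g (e n)) s = g (ev e s)"
  by (cases s) auto

lemma ev_in: "pars_tm s \<subseteq> M \<Longrightarrow> \<forall>n\<in>fv_tm s. e n \<in> M \<Longrightarrow> ev e s \<in> M"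
  by (cases s) auto

definition mem_embedding :: "('v \<Rightarrow> 'v \<Rightarrow> bool) \<Rightarrow> 'v set \<Rightarrow> ('v \<Rightarrow> 'v) \<Rightarrow> bool" where
  "mem_embedding mem M g \<longleftrightarrow> inj_on g M \<and> (\<forall>x\<in>M. elts mem (g x) = g ` (elts mem x \<inter> M))"

lemma mem_embedding_elts:
  assumes "mem_embedding mem M g" "x \<in> M" "mem u (g x)"
  obtains y where "mem y x" "y \<in> M" "u = g y"
  using assms unfolding mem_embedding_def elts_def by blast

lemma mem_embedding_iff:
  assumes "mem_embedding mem M g" "a \<in> M" "b \<in> M"
  shows "mem (g a) (g b) \<longleftrightarrow> mem a b"
proof
  assume "mem (g a) (g b)"
  then obtain c where "mem c b" "c \<in> M" "g a = g c"
    using mem_embedding_elts[OF assms(1,3)] by blast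
  then show "mem a b"
    using assms unfolding mem_embedding_def inj_on_def by auto
next
  assume "mem a b"
  then have "g a \<in> g ` (elts mem b \<inter> M)"
    using \<open>a \<in> M\<close> by (simp add: elts_def)
  moreover have "elts mem (g b) = g ` (elts mem b \<inter> M)"
    using assms(1,3) unfolding mem_embedding_def by blast
  ultimately have "g a \<in> elts mem (g b)"
    by simp
  then show "mem (g a) (g b)"
    by (simp add: elts_def)
qed

text \<open>Negated membership and bounded quantifiers persist along such embeddings because the elements
  of an image \<open>g x\<close> are exactly the images of elements of \<open>x\<close> in \<open>M\<close>.\<close>

lemma sat_upward:
  assumes emb: "mem_embedding mem M g" and "g ` M \<subseteq> U"
  shows "params \<phi> \<subseteq> M \<Longrightarrow> \<forall>p\<in>params \<phi>. g p = p \<Longrightarrow> \<forall>n\<in>fv \<phi>. e n \<in> M \<Longrightarrow> sat mem M e \<phi>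
    \<Longrightarrow> sat mem U (\<lambda>n. g (e n)) \<phi>"
proof (induction \<phi> arbitrary: e)
  case (FConj I f)
  have "sat mem U (\<lambda>n. g (e n)) (f i)" if "i \<in> I" for i
    using FConj.prems that by (intro FConj.IH) auto
  then show ?case
    by (simp only: sat.simps) blast
next
  case (FDisj I f)
  then obtain i where "i \<in> I" "sat mem M e (f i)"
    by auto
  then have "sat mem U (\<lambda>n. g (e n)) (f i)"
    using FDisj.prems by (intro FDisj.IH) auto
  then show ?case
    using \<open>i \<in> I\<close> by (simp only: sat.simps) blast
next
  case (FBall x t p)
  have "ev e t \<in> M" "ev (\<lambda>n. g (e n)) t = g (ev e t)"
    using FBall.prems by (auto intro: ev_in ev_comp)
  have IH: "sat mem U (\<lambda>n. g ((e(x := y)) n)) p" if "mem y (ev e t)" "y \<in> M" for y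
  proof -
    have "params p \<subseteq> M" "\<forall>q\<in>params p. g q = q" "\<forall>n\<in>fv p. (e(x := y)) n \<in> M"
      "sat mem M (e(x := y)) p"
      using FBall.prems that by auto
    then show ?thesis
      using FBall.IH by blast
  qed
  show ?case
  proof (simp only: sat.simps, intro ballI impI)
    fix u
    assume "mem u (ev (\<lambda>n. g (e n)) t)"
    then obtain y where "mem y (ev e t)" "y \<in> M" "u = g y"
      using mem_embedding_elts[OF emb \<open>ev e t \<in> M\<close>] \<open>ev (\<lambda>n. g (e n)) t = g (ev e t)\<close> by metis
    then show "sat mem U ((\<lambda>n. g (e n))(x := u)) p"
      using IH by (simp add: fun_upd_def if_distrib)
  qed
next
  case (FEx x p)
  then obtain u where "u \<in> M" "sat mem M (e(x := u)) p"
    by auto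
  moreover have "params p \<subseteq> M" "\<forall>q\<in>params p. g q = q" "\<forall>n\<in>fv p. (e(x := u)) n \<in> M"
    using FEx.prems \<open>u \<in> M\<close> by auto
  ultimately have "sat mem U (\<lambda>n. g ((e(x := u)) n)) p"
    using FEx.IH by blast
  then show ?case
    using \<open>u \<in> M\<close> \<open>g ` M \<subseteq> U\<close> by (auto simp: fun_upd_def if_distrib)
qed (use emb in \<open>auto simp: ev_comp ev_in mem_embedding_iff mem_embedding_def inj_on_eq_iff\<close>)

definition skolem_witness :: "('v \<Rightarrow> 'v \<Rightarrow> bool) \<Rightarrow> 'v set \<Rightarrow> nat \<Rightarrow> 'v fm \<Rightarrow> (nat \<Rightarrow> 'v) \<Rightarrow> 'v" where
  "skolem_witness mem U x p e = (SOME u. u \<in> U \<and> (sat mem U e (FEx x p) \<longrightarrow> sat mem U (e(x := u)) p))"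

lemma skolem_witness:
  assumes "U \<noteq> {}"
  shows "skolem_witness mem U x p e \<in> U"
    and "sat mem U e (FEx x p) \<Longrightarrow> sat mem U (e(x := skolem_witness mem U x p e)) p"
proof -
  have "\<exists>u. u \<in> U \<and> (sat mem U e (FEx x p) \<longrightarrow> sat mem U (e(x := u)) p)"
    using assms by auto
  then have "skolem_witness mem U x p e \<in> U \<and>
      (sat mem U e (FEx x p) \<longrightarrow> sat mem U (e(x := skolem_witness mem U x p e)) p)"
    unfolding skolem_witness_def by (rule someI_ex)
  then show "skolem_witness mem U x p e \<in> U"
    and "sat mem U e (FEx x p) \<Longrightarrow> sat mem U (e(x := skolem_witness mem U x p e)) p"
    by blast+
qed

text \<open>Environments are only relevant on the finitely many free variables of a formula; coding them
  by lists turns closure under Skolem witnesses into closure under finitary functions.\<close>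

definition list_env :: "'v \<Rightarrow> 'v list \<Rightarrow> nat \<Rightarrow> 'v" where
  "list_env d xs n = (if n < length xs then xs ! n else d)"

lemma skolem_closedI:
  assumes "d \<in> M" and fin: "\<forall>\<psi>\<in>Q. finite (fv \<psi>)"
    and closed: "\<And>x p xs. FEx x p \<in> Q \<Longrightarrow> set xs \<subseteq> M \<Longrightarrow> skolem_witness mem U x p (list_env d xs) \<in> M"
    and "U \<noteq> {}"
  shows "skolem_closed mem U Q M"
  unfolding skolem_closed_def
proof (intro allI impI)
  fix x p e
  assume "FEx x p \<in> Q" "\<forall>n\<in>fv (FEx x p). e n \<in> M" "sat mem U e (FEx x p)"
  obtain m where m: "\<forall>n\<in>fv (FEx x p). n < m"
    using fin \<open>FEx x p \<in> Q\<close> finite_nat_set_iff_bounded by blast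
  define xs where "xs = map (\<lambda>n. if n \<in> fv (FEx x p) then e n else d) [0..<m]"
  have agree: "list_env d xs n = e n" if "n \<in> fv (FEx x p)" for n
    using m that unfolding xs_def list_env_def by simp
  define u where "u = skolem_witness mem U x p (list_env d xs)"
  have "set xs \<subseteq> M"
    using \<open>d \<in> M\<close> \<open>\<forall>n\<in>fv (FEx x p). e n \<in> M\<close> unfolding xs_def by auto
  then have "u \<in> M"
    unfolding u_def by (rule closed[OF \<open>FEx x p \<in> Q\<close>])
  have "sat mem U (list_env d xs) (FEx x p)"
    using \<open>sat mem U e (FEx x p)\<close> agree sat_cong[of "FEx x p" "list_env d xs" e] by simp
  then have "sat mem U ((list_env d xs)(x := u)) p"
    unfolding u_def by (rule skolem_witness(2)[OF \<open>U \<noteq> {}\<close>])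
  moreover have "sat mem U ((list_env d xs)(x := u)) p = sat mem U (e(x := u)) p"
    using agree by (intro sat_cong) auto
  ultimately show "\<exists>u\<in>M. sat mem U (e(x := u)) p"
    using \<open>u \<in> M\<close> by blast
qed

section \<open>Transitive closures, the Mostowski collapse and Skolem hulls\<close>

definition tcl :: "('v \<Rightarrow> 'v \<Rightarrow> bool) \<Rightarrow> 'v \<Rightarrow> 'v set" where
  "tcl mem x = {y. mem\<^sup>+\<^sup>+ y x}"

definition trans_set :: "('v \<Rightarrow> 'v \<Rightarrow> bool) \<Rightarrow> 'v set \<Rightarrow> bool" where
  "trans_set mem S \<longleftrightarrow> (\<forall>x\<in>S. elts mem x \<subseteq> S)"

lemma tcl_subset: "trans_set mem S \<Longrightarrow> elts mem x \<subseteq> S \<Longrightarrow> tcl mem x \<subseteq> S"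
proof
  fix y
  assume "trans_set mem S" "elts mem x \<subseteq> S" "y \<in> tcl mem x"
  then have "mem\<^sup>+\<^sup>+ y x"
    by (simp add: tcl_def)
  then show "y \<in> S"
    using \<open>trans_set mem S\<close> \<open>elts mem x \<subseteq> S\<close>
    by (induction rule: converse_tranclp_induct) (auto simp: trans_set_def elts_def)
qed

lemma elts_subset_tcl: "elts mem x \<subseteq> tcl mem x"
  by (auto simp: elts_def tcl_def)

lemma tcl_mono: "y \<in> tcl mem x \<Longrightarrow> tcl mem y \<subseteq> tcl mem x"
  unfolding tcl_def by (auto intro: tranclp_trans)

definition extensional_in :: "('v \<Rightarrow> 'v \<Rightarrow> bool) \<Rightarrow> 'v set \<Rightarrow> bool" where
  "extensional_in mem M \<longleftrightarrow> (\<forall>x\<in>M. \<forall>y\<in>M. x \<noteq> y \<longrightarrow> (\<exists>z\<in>M. mem z x \<noteq> mem z y))"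

locale zf =
  fixes mem :: "'v \<Rightarrow> 'v \<Rightarrow> bool"
  assumes zf_model: "zf_model mem"
begin

lemma extensionality: "elts mem x = elts mem y \<Longrightarrow> x = y"
  using zf_model unfolding zf_model_def by (elim conjE) iprover

lemma wfP_mem: "wfP mem"
  using zf_model unfolding zf_model_def by (elim conjE) iprover

lemma separation: "S \<subseteq> elts mem x \<Longrightarrow> \<exists>z. elts mem z = S"
  using zf_model unfolding zf_model_def by (elim conjE) iprover

lemma replacement: "\<exists>z. elts mem z = f ` elts mem x"
  using zf_model unfolding zf_model_def by (elim conjE) iprover

lemma power_set: "\<exists>z. elts mem z = {y. elts mem y \<subseteq> elts mem x}"
  using zf_model unfolding zf_model_def by (elim conjE) iprover

lemma power_set_not_ordLeq:
  assumes "elts mem c = {y. elts mem y \<subseteq> elts mem a}"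
  shows "\<not> |elts mem c| \<le>o |elts mem a|"
proof
  assume c_le_a: "|elts mem c| \<le>o |elts mem a|"
  have "Pow (elts mem a) \<subseteq> elts mem ` elts mem c"
  proof
    fix S
    assume "S \<in> Pow (elts mem a)"
    moreover obtain z where "elts mem z = S"
      using separation \<open>S \<in> Pow (elts mem a)\<close> by blast
    ultimately show "S \<in> elts mem ` elts mem c"
      using assms by (intro image_eqI[of S _ z]) auto
  qed
  then have "|Pow (elts mem a)| \<le>o |elts mem ` elts mem c|"
    by (rule card_of_mono1)
  then have "|Pow (elts mem a)| \<le>o |elts mem c|"
    using card_of_image by (rule ordLeq_transitive)
  then have "|Pow (elts mem a)| \<le>o |elts mem a|"
    using c_le_a by (rule ordLeq_transitive)
  then show False
    by (rule notE[OF not_ordLess_ordLeq[OF card_of_Pow]])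
qed

definition collapse :: "'v set \<Rightarrow> 'v \<Rightarrow> 'v" where
  "collapse M = wfrec {(y, x). mem y x} (\<lambda>f x. THE z. elts mem z = f ` (elts mem x \<inter> M))"

lemma elts_collapse: "elts mem (collapse M x) = collapse M ` (elts mem x \<inter> M)"
proof -
  have "wf {(y, x). mem y x}"
    using wfP_mem by (simp add: wfp_def)
  then have "collapse M x = (THE z. elts mem z = cut (collapse M) {(y, x). mem y x} x ` (elts mem x \<inter> M))"
    unfolding collapse_def by (subst wfrec) simp_all
  also have "cut (collapse M) {(y, x). mem y x} x ` (elts mem x \<inter> M) = collapse M ` (elts mem x \<inter> M)"
    by (rule image_cong) (simp_all add: cut_def elts_def)
  finally have collapse_eq: "collapse M x = (THE z. elts mem z = collapse M ` (elts mem x \<inter> M))" .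
  obtain y where "elts mem y = elts mem x \<inter> M"
    using separation[of "elts mem x \<inter> M" x] by blast
  then obtain z where "elts mem z = collapse M ` (elts mem x \<inter> M)"
    using replacement[of "collapse M" y] by metis
  then have "\<exists>!z. elts mem z = collapse M ` (elts mem x \<inter> M)"
    using extensionality by metis
  then show ?thesis
    unfolding collapse_eq by (rule theI')
qed

lemma inj_on_collapse:
  assumes "extensional_in mem M"
  shows "inj_on (collapse M) M"
proof -
  have "\<forall>y\<in>M. collapse M x = collapse M y \<longrightarrow> x = y" if "x \<in> M" for x
    using that
  proof (induction x rule: wfp_induct_rule[OF wfP_mem])
    case (1 x)
    show ?case
    proof (intro ballI impI)
      fix y
      assume "y \<in> M" and eq: "collapse M x = collapse M y"
      have "elts mem x \<inter> M = elts mem y \<inter> M"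
      proof (intro equalityI subsetI)
        fix z
        assume z: "z \<in> elts mem x \<inter> M"
        then have "collapse M z \<in> collapse M ` (elts mem y \<inter> M)"
          using eq elts_collapse[of M] by (metis imageI)
        then obtain w where "w \<in> elts mem y \<inter> M" "collapse M z = collapse M w"
          by blast
        with 1 z show "z \<in> elts mem y \<inter> M"
          by (auto simp: elts_def)
      next
        fix w
        assume w: "w \<in> elts mem y \<inter> M"
        then have "collapse M w \<in> collapse M ` (elts mem x \<inter> M)"
          using eq elts_collapse[of M] by (metis imageI)
        then obtain z where z: "z \<in> elts mem x \<inter> M" "collapse M w = collapse M z"
          by blast
        with 1 w have "z = w"
          by (simp add: elts_def)
        with z show "w \<in> elts mem x \<inter> M"
          by simp
      qed
      then show "x = y"
        using assms \<open>x \<in> M\<close> \<open>y \<in> M\<close> unfolding extensional_in_def elts_def by blast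
    qed
  qed
  then show ?thesis
    unfolding inj_on_def by blast
qed

lemma mem_embedding_collapse: "extensional_in mem M \<Longrightarrow> mem_embedding mem M (collapse M)"
  by (simp add: mem_embedding_def inj_on_collapse elts_collapse)

lemma collapse_fixes:
  assumes "F \<subseteq> M" "trans_set mem F" "x \<in> F"
  shows "collapse M x = x"
  using \<open>x \<in> F\<close>
proof (induction x rule: wfp_induct_rule[OF wfP_mem])
  case (1 x)
  have "elts mem x \<subseteq> F"
    using assms(2) 1 by (simp add: trans_set_def)
  then have "elts mem (collapse M x) = collapse M ` elts mem x"
    using \<open>F \<subseteq> M\<close> elts_collapse by (metis inf.absorb1 order.trans)
  also have "\<dots> = elts mem x"
    using 1 \<open>elts mem x \<subseteq> F\<close> by (force simp: elts_def)
  finally show ?case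
    by (rule extensionality)
qed

lemma card_of_elts_collapse: "|elts mem (collapse M x)| \<le>o |M|"
proof -
  have "|elts mem (collapse M x)| \<le>o |collapse M ` M|"
    by (rule card_of_mono1) (auto simp: elts_collapse)
  also have "|collapse M ` M| \<le>o |M|"
    by (rule card_of_image)
  finally show ?thesis .
qed

lemma sat_collapse:
  assumes "M \<subseteq> U" "skolem_closed mem U (subfms \<phi>) M" "extensional_in mem M" "collapse M ` M \<subseteq> U"
    and "F \<subseteq> M" "trans_set mem F" "params \<phi> \<subseteq> F"
    and "\<forall>n\<in>fv \<phi>. e n \<in> M" "sat mem U e \<phi>"
  shows "sat mem U (\<lambda>n. collapse M (e n)) \<phi>"
proof -
  have "sat mem M e \<phi>"
    using sat_downward[OF assms(1,2) subset_refl assms(8,9)] .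
  moreover have "\<forall>p\<in>params \<phi>. collapse M p = p"
    using collapse_fixes[OF assms(5,6)] assms(7) by blast
  ultimately show ?thesis
    using sat_upward[OF mem_embedding_collapse[OF assms(3)] assms(4)] assms(5,7,8) by blast
qed

definition distinguisher :: "'v set \<Rightarrow> 'v \<Rightarrow> 'v \<Rightarrow> 'v" where
  "distinguisher U y z = (SOME w. w \<in> U \<and> (y \<in> U \<longrightarrow> z \<in> U \<longrightarrow> y \<noteq> z \<longrightarrow> mem w y \<noteq> mem w z))"

lemma distinguisher:
  assumes "trans_set mem U" "U \<noteq> {}"
  shows "distinguisher U y z \<in> U"
    and "y \<in> U \<Longrightarrow> z \<in> U \<Longrightarrow> y \<noteq> z \<Longrightarrow> mem (distinguisher U y z) y \<noteq> mem (distinguisher U y z) z"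
proof -
  have "\<exists>w. w \<in> U \<and> (y \<in> U \<longrightarrow> z \<in> U \<longrightarrow> y \<noteq> z \<longrightarrow> mem w y \<noteq> mem w z)"
  proof (cases "y \<in> U \<and> z \<in> U \<and> y \<noteq> z")
    case True
    then obtain w where "mem w y \<noteq> mem w z"
      using extensionality unfolding elts_def by blast
    moreover have "w \<in> U"
      using calculation True \<open>trans_set mem U\<close> unfolding trans_set_def elts_def by blast
    ultimately show ?thesis
      by blast
  qed (use \<open>U \<noteq> {}\<close> in blast)
  then have "distinguisher U y z \<in> U \<and> (y \<in> U \<longrightarrow> z \<in> U \<longrightarrow> y \<noteq> z
      \<longrightarrow> mem (distinguisher U y z) y \<noteq> mem (distinguisher U y z) z)"
    unfolding distinguisher_def by (rule someI_ex)
  then show "distinguisher U y z \<in> U"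
    and "y \<in> U \<Longrightarrow> z \<in> U \<Longrightarrow> y \<noteq> z \<Longrightarrow> mem (distinguisher U y z) y \<noteq> mem (distinguisher U y z) z"
    by blast+
qed

text \<open>Besides Skolem witnesses, a hull is closed under a choice of an element distinguishing two
  distinct sets. This makes the hull extensional, hence its collapse injective.\<close>

definition skolem_functions :: "'v set \<Rightarrow> 'v \<Rightarrow> 'v fm set \<Rightarrow> ('v list \<Rightarrow> 'v) set" where
  "skolem_functions U d Q = insert (\<lambda>xs. distinguisher U (hd xs) (hd (tl xs)))
     ((\<lambda>(x, p) xs. skolem_witness mem U x p (list_env d xs)) ` {(x, p). FEx x p \<in> Q})"

lemma card_of_skolem_functions:
  assumes D: "infinite D" and "|Q| \<le>o |D|"
  shows "|skolem_functions U d Q| \<le>o |D|"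
proof -
  have "|{(x, p). FEx x p \<in> Q}| \<le>o |Q|"
    unfolding card_of_ordLeq[symmetric] by (intro exI[of _ "\<lambda>(x, p). FEx x p"]) (auto simp: inj_on_def)
  then have "|{(x, p). FEx x p \<in> Q}| \<le>o |D|"
    using assms(2) by (rule ordLeq_transitive)
  then have "|(\<lambda>(x, p) xs. skolem_witness mem U x p (list_env d xs)) ` {(x, p). FEx x p \<in> Q}| \<le>o |D|"
    by (rule ordLeq_transitive[OF card_of_image])
  then show ?thesis
    unfolding skolem_functions_def by (rule card_of_insert_ordLeq_infinite[OF D])
qed

lemma skolem_functions_in:
  assumes "trans_set mem U" "U \<noteq> {}" "f \<in> skolem_functions U d Q"
  shows "f xs \<in> U"
  using assms(3) skolem_witness(1)[OF assms(2)] distinguisher(1)[OF assms(1,2)]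
  unfolding skolem_functions_def by auto

lemma skolem_hull:
  assumes "trans_set mem U" "X \<subseteq> U" "d \<in> X"
    and D: "infinite D" "|X| \<le>o |D|" "|Q| \<le>o |D|"
    and fin: "\<forall>\<psi>\<in>Q. finite (fv \<psi>)"
  obtains M where "X \<subseteq> M" "M \<subseteq> U" "|M| \<le>o |D|" "skolem_closed mem U Q M" "extensional_in mem M"
proof -
  have "U \<noteq> {}"
    using \<open>X \<subseteq> U\<close> \<open>d \<in> X\<close> by blast
  have F_U: "f xs \<in> U" if "f \<in> skolem_functions U d Q" "set xs \<subseteq> U" for f xs
    using skolem_functions_in[OF \<open>trans_set mem U\<close> \<open>U \<noteq> {}\<close> that(1)] .
  obtain M where M: "X \<subseteq> M" "M \<subseteq> U" "|M| \<le>o |D|"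
    and closed: "\<And>f xs. f \<in> skolem_functions U d Q \<Longrightarrow> set xs \<subseteq> M \<Longrightarrow> f xs \<in> M"
    using finitary_closure[OF D(1,2) card_of_skolem_functions[OF D(1,3), of U d] \<open>X \<subseteq> U\<close>] F_U
    by metis
  show ?thesis
  proof (rule that[OF M])
    show "skolem_closed mem U Q M"
    proof (rule skolem_closedI[OF _ fin _ \<open>U \<noteq> {}\<close>])
      show "d \<in> M"
        using M(1) \<open>d \<in> X\<close> by blast
      fix x p xs
      assume "FEx x p \<in> Q" "set xs \<subseteq> M"
      then have "(\<lambda>xs. skolem_witness mem U x p (list_env d xs)) \<in> skolem_functions U d Q"
        unfolding skolem_functions_def by (intro insertI2 image_eqI[of _ _ "(x, p)"]) auto
      then show "skolem_witness mem U x p (list_env d xs) \<in> M"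
        using closed \<open>set xs \<subseteq> M\<close> by blast
    qed
    show "extensional_in mem M"
      unfolding extensional_in_def
    proof (intro ballI impI)
      fix y z
      assume "y \<in> M" "z \<in> M" "y \<noteq> z"
      then have "distinguisher U y z \<in> M"
        using closed[of "\<lambda>xs. distinguisher U (hd xs) (hd (tl xs))" "[y, z]"]
        by (simp add: skolem_functions_def)
      moreover have "mem (distinguisher U y z) y \<noteq> mem (distinguisher U y z) z"
        using distinguisher(2)[OF \<open>trans_set mem U\<close> \<open>U \<noteq> {}\<close>] M(2) \<open>y \<in> M\<close> \<open>z \<in> M\<close> \<open>y \<noteq> z\<close>
        by blast
      ultimately show "\<exists>w\<in>M. mem w y \<noteq> mem w z"
        by blast
    qed
  qed
qed

end

section \<open>The sets of hereditary cardinality below a strongly inaccessible\<close>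

locale inaccessible = zf +
  fixes k
  assumes strongly_inaccessible: "strongly_inaccessible mem k"
begin

abbreviation K where "K \<equiv> elts mem k"
abbreviation H where "H \<equiv> Hk mem k"

lemma ordinal_k: "ordinal mem k"
  using strongly_inaccessible unfolding strongly_inaccessible_def cardinal_def
  by (elim conjE) iprover

lemma not_ordIso_K: "b \<in> K \<Longrightarrow> \<not> |elts mem b| =o |K|"
  using strongly_inaccessible unfolding strongly_inaccessible_def cardinal_def
  by (elim conjE) simp

lemma uncountable_K: "|UNIV :: nat set| <o |K|"
  using strongly_inaccessible unfolding strongly_inaccessible_def cardinal_def
  by (elim conjE) iprover

lemma regular: "S \<subseteq> K \<Longrightarrow> |S| <o |K| \<Longrightarrow> \<exists>b\<in>K. S \<subseteq> elts mem b"
  using strongly_inaccessible unfolding strongly_inaccessible_def cardinal_def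
  by (elim conjE) iprover

lemma strong_limit: "b \<in> K \<Longrightarrow> |Pow (elts mem b)| <o |K|"
  using strongly_inaccessible unfolding strongly_inaccessible_def cardinal_def
  by (elim conjE) simp

lemma trans_set_elts: "b \<in> K \<Longrightarrow> trans_set mem (elts mem b)"
  using ordinal_k unfolding ordinal_def transset_def trans_set_def by blast

lemma elts_subset_K: "b \<in> K \<Longrightarrow> elts mem b \<subseteq> K"
  using ordinal_k unfolding ordinal_def transset_def by blast

lemma card_of_elts_ordLess: "b \<in> K \<Longrightarrow> |elts mem b| <o |K|"
  using ordLeq_iff_ordLess_or_ordIso[THEN iffD1, OF card_of_mono1[OF elts_subset_K]] not_ordIso_K
  by blast

lemma infinite_K: "infinite K"
  by (simp add: infinite_iff_card_of_nat ordLess_imp_ordLeq[OF uncountable_K])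

lemma exists_elt_card_ge:
  assumes "|A| <o |K|"
  shows "\<exists>b\<in>K. |A| \<le>o |elts mem b|"
proof -
  have "|A| \<le>o |K|"
    using assms by (rule ordLess_imp_ordLeq)
  then obtain f where f: "inj_on f A" "f ` A \<subseteq> K"
    unfolding card_of_ordLeq[symmetric] by (elim exE conjE)
  have "|f ` A| <o |K|"
    using card_of_image assms by (rule ordLeq_ordLess_trans)
  then obtain b where "b \<in> K" "f ` A \<subseteq> elts mem b"
    using regular[OF f(2)] by blast
  moreover from this have "|A| \<le>o |elts mem b|"
    unfolding card_of_ordLeq[symmetric] using f(1) by (intro exI[of _ f]) simp
  ultimately show ?thesis
    by blast
qed

lemma card_of_UNION_ordLess:
  assumes I: "|I| <o |K|" and A: "\<forall>i\<in>I. |A i| <o |K|"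
  shows "|\<Union>i\<in>I. A i| <o |K|"
proof -
  have "\<forall>i\<in>I. \<exists>b. b \<in> K \<and> |A i| \<le>o |elts mem b|"
    using A exists_elt_card_ge by blast
  then obtain b where b: "\<forall>i\<in>I. b i \<in> K \<and> |A i| \<le>o |elts mem (b i)|"
    by (rule bchoice[THEN exE]) blast
  have "|b ` I| <o |K|"
    using card_of_image I by (rule ordLeq_ordLess_trans)
  then obtain c where c: "c \<in> K" "b ` I \<subseteq> elts mem c"
    using regular b by blast
  have "|A i| \<le>o |elts mem c|" if "i \<in> I" for i
  proof -
    have "elts mem (b i) \<subseteq> elts mem c"
      using trans_set_elts[OF c(1)] c(2) that unfolding trans_set_def by blast
    then have "|elts mem (b i)| \<le>o |elts mem c|"
      by (rule card_of_mono1)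
    with b that show ?thesis
      using ordLeq_transitive by blast
  qed
  then have "|SIGMA i:I. A i| \<le>o |I \<times> elts mem c|"
    by (intro card_of_Sigma_mono1) blast
  then have "|SIGMA i:I. A i| <o |K|"
    using card_of_Times_ordLess_infinite[OF infinite_K I card_of_elts_ordLess[OF c(1)]]
    by (rule ordLeq_ordLess_trans)
  then show ?thesis
    by (rule ordLeq_ordLess_trans[OF card_of_UNION_Sigma])
qed

lemma exists_large_elt:
  assumes "|A| <o |K|" "|B| <o |K|"
  obtains a where "a \<in> K" "|A| \<le>o |elts mem a|" "|B| \<le>o |elts mem a|" "infinite (elts mem a)"
proof -
  obtain b where b: "b \<in> K" "|B| \<le>o |elts mem b|"
    using assms(2) exists_elt_card_ge by blast
  obtain c where c: "c \<in> K" "|UNIV :: nat set| \<le>o |elts mem c|"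
    using uncountable_K exists_elt_card_ge by blast
  have "|elts mem b <+> elts mem c| <o |K|"
    using card_of_elts_ordLess b(1) c(1) by (intro card_of_Plus_ordLess_infinite infinite_K) auto
  then have "|A <+> (elts mem b <+> elts mem c)| <o |K|"
    by (rule card_of_Plus_ordLess_infinite[OF infinite_K assms(1)])
  then obtain a where a: "a \<in> K" "|A <+> (elts mem b <+> elts mem c)| \<le>o |elts mem a|"
    using exists_elt_card_ge by blast
  have bc: "|elts mem b <+> elts mem c| \<le>o |elts mem a|"
    using card_of_Plus2 a(2) by (rule ordLeq_transitive)
  show ?thesis
  proof (rule that[OF a(1)])
    show "|A| \<le>o |elts mem a|"
      using card_of_Plus1 a(2) by (rule ordLeq_transitive)
    show "|B| \<le>o |elts mem a|"
      using b(2) ordLeq_transitive[OF card_of_Plus1 bc] by (rule ordLeq_transitive)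
    have "|UNIV :: nat set| \<le>o |elts mem a|"
      using c(2) ordLeq_transitive[OF card_of_Plus2 bc] by (rule ordLeq_transitive)
    then show "infinite (elts mem a)"
      using infinite_iff_card_of_nat by blast
  qed
qed

lemma in_Hk_iff: "x \<in> H \<longleftrightarrow> |tcl mem x| <o |K|"
  by (simp add: Hk_def tcl_def)

lemma in_Hk_if_small_trans_set:
  assumes "trans_set mem S" "elts mem x \<subseteq> S" "|S| <o |K|"
  shows "x \<in> H"
  unfolding in_Hk_iff
  using card_of_mono1[OF tcl_subset[OF assms(1,2)]] assms(3) by (rule ordLeq_ordLess_trans)

lemma tcl_subset_Hk: "x \<in> H \<Longrightarrow> tcl mem x \<subseteq> H"
proof
  fix y
  assume "x \<in> H" "y \<in> tcl mem x"
  then have "|tcl mem y| \<le>o |tcl mem x|"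
    by (intro card_of_mono1 tcl_mono)
  then show "y \<in> H"
    using \<open>x \<in> H\<close> unfolding in_Hk_iff by (rule ordLeq_ordLess_trans)
qed

lemma trans_set_Hk: "trans_set mem H"
  unfolding trans_set_def using tcl_subset_Hk elts_subset_tcl by (meson subset_trans)

lemma elt_K_in_Hk: "b \<in> K \<Longrightarrow> b \<in> H"
  using trans_set_elts card_of_elts_ordLess by (intro in_Hk_if_small_trans_set) auto

lemma power_set_in_Hk:
  assumes "b \<in> K" "elts mem c = {y. elts mem y \<subseteq> elts mem b}"
  shows "c \<in> H"
proof (rule in_Hk_if_small_trans_set)
  show "trans_set mem (elts mem c \<union> elts mem b)"
    using trans_set_elts[OF assms(1)] assms(2) unfolding trans_set_def by auto
  have "|elts mem c| \<le>o |Pow (elts mem b)|"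
    unfolding card_of_ordLeq[symmetric] using assms(2) extensionality
    by (intro exI[of _ "elts mem"]) (auto simp: inj_on_def)
  then have "|elts mem c| <o |K|"
    using strong_limit[OF assms(1)] by (rule ordLeq_ordLess_trans)
  then show "|elts mem c \<union> elts mem b| <o |K|"
    using card_of_elts_ordLess[OF assms(1)] by (rule card_of_Un_ordLess_infinite[OF infinite_K])
qed simp

lemma card_of_finite_ordLess: "finite A \<Longrightarrow> |A| <o |K|"
  using finite_card_of_ordLess_infinite[OF _ infinite_K] .

lemma card_of_insert_ordLess: "|A| <o |K| \<Longrightarrow> |insert a A| <o |K|"
  using card_of_Un_ordLess_infinite[OF infinite_K card_of_finite_ordLess[of "{a}"]] by simp

lemma card_of_subfms_ordLess: "sigma_fm mem k \<phi> \<Longrightarrow> |subfms \<phi>| <o |K|"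
proof (induction \<phi>)
  case (FConj I f)
  then have "|\<Union>i\<in>I. subfms (f i)| <o |K|"
    by (intro card_of_UNION_ordLess) auto
  then show ?case
    by (simp add: card_of_insert_ordLess)
next
  case (FDisj I f)
  then have "|\<Union>i\<in>I. subfms (f i)| <o |K|"
    by (intro card_of_UNION_ordLess) auto
  then show ?case
    by (simp add: card_of_insert_ordLess)
qed (simp_all add: card_of_insert_ordLess card_of_finite_ordLess)

lemma card_of_params_ordLess: "sigma_fm mem k \<phi> \<Longrightarrow> |params \<phi>| <o |K|"
proof (induction \<phi>)
  case (FConj I f)
  then show ?case
    by (simp add: card_of_UNION_ordLess)
next
  case (FDisj I f)
  then show ?case
    by (simp add: card_of_UNION_ordLess)
next
  case (FBall x t p)
  then show ?case
    using card_of_Un_ordLess_infinite[OF infinite_K card_of_finite_ordLess[OF finite_pars_tm]]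
    by simp
qed (simp_all add: card_of_finite_ordLess finite_pars_tm)

lemma trans_superset_in_Hk:
  assumes "P \<subseteq> H" "|P| <o |K|"
  obtains T where "P \<subseteq> T" "T \<subseteq> H" "trans_set mem T" "|T| <o |K|"
proof (rule that[of "P \<union> (\<Union>p\<in>P. tcl mem p)"])
  show "P \<subseteq> P \<union> (\<Union>p\<in>P. tcl mem p)"
    by (rule Un_upper1)
  show "P \<union> (\<Union>p\<in>P. tcl mem p) \<subseteq> H"
    using assms(1) tcl_subset_Hk by blast
  show "trans_set mem (P \<union> (\<Union>p\<in>P. tcl mem p))"
    unfolding trans_set_def using elts_subset_tcl tcl_mono by fast
  have "|\<Union>p\<in>P. tcl mem p| <o |K|"
    using assms in_Hk_iff by (intro card_of_UNION_ordLess) auto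
  then show "|P \<union> (\<Union>p\<in>P. tcl mem p)| <o |K|"
    using assms(2) by (rule card_of_Un_ordLess_infinite[OF infinite_K, rotated])
qed

lemma collapse_image_in_Hk:
  assumes "a \<in> K" "|M| \<le>o |elts mem a|"
  shows "collapse M ` M \<subseteq> H"
proof -
  have "|collapse M ` M| \<le>o |elts mem a|"
    using card_of_image assms(2) by (rule ordLeq_transitive)
  then have "|collapse M ` M| <o |K|"
    using card_of_elts_ordLess[OF assms(1)] by (rule ordLeq_ordLess_trans)
  moreover have "trans_set mem (collapse M ` M)"
    unfolding trans_set_def by (auto simp: elts_collapse)
  moreover have "elts mem (collapse M x) \<subseteq> collapse M ` M" for x
    by (auto simp: elts_collapse)
  ultimately show ?thesis
    using in_Hk_if_small_trans_set by blast
qed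

lemma small_sigma_witness:
  assumes \<phi>: "sigma_fm mem k \<phi>" "fv \<phi> \<subseteq> {0, 1}"
    and a: "a \<in> K" "infinite (elts mem a)" "|subfms \<phi>| \<le>o |elts mem a|"
    and T: "params \<phi> \<subseteq> T" "T \<subseteq> H" "trans_set mem T" "|T| \<le>o |elts mem a|"
    and c: "c \<in> H" "sat mem H (\<lambda>n. if n = 0 then a else c) \<phi>"
  obtains b where "b \<in> H" "sat mem H (\<lambda>n. if n = 0 then a else b) \<phi>" "|elts mem b| \<le>o |elts mem a|"
proof -
  define F where "F = insert a (T \<union> elts mem a)"
  have "trans_set mem F"
    using T(3) trans_set_elts[OF a(1)] unfolding F_def trans_set_def by auto
  have "insert c F \<subseteq> H"
    using c(1) elt_K_in_Hk[OF a(1)] T(2) trans_set_Hk unfolding F_def trans_set_def by auto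
  have "|T \<union> elts mem a| \<le>o |elts mem a|"
    using T(4) ordLeq_refl[OF card_of_Card_order] by (rule card_of_Un_ordLeq_infinite[OF a(2)])
  then have "|insert c F| \<le>o |elts mem a|"
    unfolding F_def by (intro card_of_insert_ordLeq_infinite[OF a(2)])
  moreover have "\<forall>\<psi>\<in>subfms \<phi>. finite (fv \<psi>)"
    using \<phi>(2) finite_fv_subfm[OF finite_subset] by blast
  ultimately obtain M where M: "insert c F \<subseteq> M" "M \<subseteq> H" "|M| \<le>o |elts mem a|"
    "skolem_closed mem H (subfms \<phi>) M" "extensional_in mem M"
    by (rule skolem_hull[OF trans_set_Hk \<open>insert c F \<subseteq> H\<close> insertI1 a(2) _ a(3)])
  define e where "e n = (if n = 0 then a else c)" for n :: nat
  have "F \<subseteq> M" "params \<phi> \<subseteq> F" "\<forall>n\<in>fv \<phi>. e n \<in> M" "sat mem H e \<phi>"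
    using M(1) T(1) c(2) unfolding e_def F_def by auto
  then have "sat mem H (\<lambda>n. collapse M (e n)) \<phi>"
    by (intro sat_collapse[OF M(2,4,5) collapse_image_in_Hk[OF a(1) M(3)] _ \<open>trans_set mem F\<close>])
  moreover have "(\<lambda>n. collapse M (e n)) = (\<lambda>n. if n = 0 then a else collapse M c)"
    using collapse_fixes[OF \<open>F \<subseteq> M\<close> \<open>trans_set mem F\<close>, of a] unfolding e_def F_def by auto
  moreover have "collapse M c \<in> H"
    using collapse_image_in_Hk[OF a(1) M(3)] M(1) by blast
  moreover have "|elts mem (collapse M c)| \<le>o |elts mem a|"
    using card_of_elts_collapse M(3) by (rule ordLeq_transitive)
  ultimately show ?thesis
    using that by simp
qed

lemma power_set_not_sigma_definable:
  assumes "sigma_fm mem k \<phi>" "fv \<phi> \<subseteq> {0, 1}"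
    and defines_power: "\<forall>a\<in>H. \<forall>b\<in>H. sat mem H (\<lambda>n. if n = 0 then a else b) \<phi>
      \<longleftrightarrow> elts mem b = {y. elts mem y \<subseteq> elts mem a}"
  shows False
proof -
  obtain T where T: "params \<phi> \<subseteq> T" "T \<subseteq> H" "trans_set mem T" "|T| <o |K|"
    by (rule trans_superset_in_Hk[OF sigma_fm_params[OF assms(1)] card_of_params_ordLess[OF assms(1)]])
  obtain a where a: "a \<in> K" "|T| \<le>o |elts mem a|" "|subfms \<phi>| \<le>o |elts mem a|" "infinite (elts mem a)"
    by (rule exists_large_elt[OF T(4) card_of_subfms_ordLess[OF assms(1)]])
  obtain c where c: "elts mem c = {y. elts mem y \<subseteq> elts mem a}"
    using power_set by blast
  have "a \<in> H" "c \<in> H"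
    using elt_K_in_Hk power_set_in_Hk a(1) c by auto
  then have "sat mem H (\<lambda>n. if n = 0 then a else c) \<phi>"
    using defines_power c by blast
  then obtain b where "b \<in> H" "sat mem H (\<lambda>n. if n = 0 then a else b) \<phi>" "|elts mem b| \<le>o |elts mem a|"
    by (rule small_sigma_witness[OF assms(1,2) a(1,4,3) T(1-3) a(2) \<open>c \<in> H\<close>])
  then have "elts mem b = {y. elts mem y \<subseteq> elts mem a}"
    using defines_power \<open>a \<in> H\<close> by blast
  then show False
    using power_set_not_ordLeq \<open>|elts mem b| \<le>o |elts mem a|\<close> by blast
qed

end

theorem mainTheorem3:
  fixes mem :: "'v \<Rightarrow> 'v \<Rightarrow> bool" and k :: 'v
  assumes "zf_model mem"
    and "strongly_inaccessible mem k"
  shows "\<not> (\<exists>\<phi> :: 'v fm. sigma_fm mem k \<phi> \<and> fv \<phi> \<subseteq> {0, 1} \<and>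
            (\<forall>a\<in>Hk mem k. \<forall>b\<in>Hk mem k.
               sat mem (Hk mem k) (\<lambda>n. if n = 0 then a else b) \<phi>
               \<longleftrightarrow> elts mem b = {y. elts mem y \<subseteq> elts mem a}))"
proof -
  interpret inaccessible mem k
    using assms by unfold_locales
  show ?thesis
    using power_set_not_sigma_definable by blast
qed

end
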